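(* Let $n\ge3$ be odd, $M\in\mathcal S^{n\times n}$ distinguished, and $S$ a spin$^c$ set for $M$. If $J_M(U)\ne\emptyset$ for every $U\subseteq S$ with $|U|=3$, then there exists $g\in G_n$ such that $(gM,gS)$ is a spin$^c$ pair in standard form.
   Context: $\mathcal S=\{0,1,2,3\}$ is the Klein four-group ($\mathbb Z_2$-vector space) with $x+x=0$, $1+2=3$, $1+3=2$, $2+3=1$; conjugation is the involution $\bar0=0,\bar1=1,\bar2=3,\bar3=2$. $\mathcal P_n$ is the power set of $\{1,\dots,n\}$ (addition = symmetric difference); $|U|_2=|U|\bmod2$; $J_M(U)=\{j:\sum_{i\in U}M_{ij}=1\}$; $r_i^S(M)=\sum_{j\in S}M_{ij}$. $S$ is a spin$^c$ set for $M$ (and $(M,S)$ a spin$^c$ pair) if $|(J_M(U)+U)\cap S|_2=\binom{|U|}2\bmod 2$ for all $U\in\mathcal P_n$. A square matrix is distinguished if it has $1$ on the diagonal and $2$ or $3$ off it; self-conjugate if $A^t=\overline A$. $G_n=C_2\wr S_n$ acts on $\mathcal S^{n\times n}$ ($k$-th generator of $C_2^n$ conjugates column $k$; $\sigma\in S_n$ acts by $P_\sigma MP_\sigma^{-1}$) and on $\mathcal P_n$ via $G_n\to S_n$. A spin$^c$ pair $(M,S)$ is in standard form if: (i) $S=\{1,\dots,|S|\}$; (ii) the first row of $M$ is $[1,2,\dots,2]$; (iii) $M$ is distinguished with block form $\begin{bmatrix}A&2&*\\2&B&*\\ *&*&*\end{bmatrix}$, diagonal blocks of degrees $k,l,r$,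 the blocks marked $2$ having all entries $2$; (iv) $k\ge l$, $k+l=|S|$; (v) $A,B$ self-conjugate; (vi) $r_1^S(M)=\dots=r_k^S(M)\ne r_{k+1}^S(M)=\dots=r_{k+l}^S(M)$ (possibly $l=0$). *)

theory Defs
  imports "HOL-Combinatorics.Permutations"
begin

text \<open>The Klein four-group S = {0,1,2,3} with 1+2=3, 1+3=2, 2+3=1, x+x=0.\<close>
datatype klein = K0 | K1 | K2 | K3

fun kadd :: "klein \<Rightarrow> klein \<Rightarrow> klein" where
  "kadd K0 y = y"
| "kadd K1 K0 = K1" | "kadd K1 K1 = K0" | "kadd K1 K2 = K3" | "kadd K1 K3 = K2"
| "kadd K2 K0 = K2" | "kadd K2 K1 = K3" | "kadd K2 K2 = K0" | "kadd K2 K3 = K1"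
| "kadd K3 K0 = K3" | "kadd K3 K1 = K2" | "kadd K3 K2 = K1" | "kadd K3 K3 = K0"

instantiation klein :: comm_monoid_add
begin
definition zero_klein_def: "0 = K0"
definition plus_klein_def: "x + y = kadd x y"
instance
proof
  fix a b c :: klein
  show "a + b + c = a + (b + c)" unfolding plus_klein_def
    by (cases a; cases b; cases c) auto
  show "a + b = b + a" unfolding plus_klein_def
    by (cases a; cases b) auto
  show "0 + a = a" unfolding plus_klein_def zero_klein_def by simp
qed
end

fun kconj :: "klein \<Rightarrow> klein" where
  "kconj K0 = K0" | "kconj K1 = K1" | "kconj K2 = K3" | "kconj K3 = K2"

text \<open>n x n matrices over S are functions on indices 1..n (values outside are irrelevant).\<close>
type_synonym kmat = "nat \<Rightarrow> nat \<Rightarrow> klein"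

definition symdiff :: "'a set \<Rightarrow> 'a set \<Rightarrow> 'a set" where
  "symdiff A B = (A - B) \<union> (B - A)"

definition JM :: "nat \<Rightarrow> kmat \<Rightarrow> nat set \<Rightarrow> nat set" where
  "JM n M U = {j \<in> {1..n}. (\<Sum>i\<in>U. M i j) = K1}"

definition row_sum :: "kmat \<Rightarrow> nat set \<Rightarrow> nat \<Rightarrow> klein" where
  "row_sum M S i = (\<Sum>j\<in>S. M i j)"

definition spinc_set :: "nat \<Rightarrow> kmat \<Rightarrow> nat set \<Rightarrow> bool" where
  "spinc_set n M S \<longleftrightarrow> S \<subseteq> {1..n} \<and>
     (\<forall>U. U \<subseteq> {1..n} \<longrightarrow>
        card (symdiff (JM n M U) U \<inter> S) mod 2 = (card U choose 2) mod 2)"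

definition distinguished :: "nat \<Rightarrow> kmat \<Rightarrow> bool" where
  "distinguished n M \<longleftrightarrow> (\<forall>i\<in>{1..n}. M i i = K1) \<and>
     (\<forall>i\<in>{1..n}. \<forall>j\<in>{1..n}. i \<noteq> j \<longrightarrow> M i j \<in> {K2, K3})"

definition self_conj_block :: "kmat \<Rightarrow> nat set \<Rightarrow> bool" where
  "self_conj_block M I \<longleftrightarrow> (\<forall>i\<in>I. \<forall>j\<in>I. M j i = kconj (M i j))"

text \<open>Action of g = (c, sigma) in G_n = C_2 wr S_n: rows/columns permuted by sigma
  (P_sigma M P_sigma^-1), then column j conjugated iff c j; on subsets via sigma.\<close>
definition gact :: "(nat \<Rightarrow> bool) \<Rightarrow> (nat \<Rightarrow> nat) \<Rightarrow> kmat \<Rightarrow> kmat" where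
  "gact c \<sigma> M = (\<lambda>i j. (if c j then kconj else id) (M (inv \<sigma> i) (inv \<sigma> j)))"

definition standard_form :: "nat \<Rightarrow> kmat \<Rightarrow> nat set \<Rightarrow> bool" where
  "standard_form n M S \<longleftrightarrow>
     spinc_set n M S \<and>
     S = {1..card S} \<and>
     M 1 1 = K1 \<and> (\<forall>j\<in>{2..n}. M 1 j = K2) \<and>
     distinguished n M \<and>
     (\<exists>k l. k + l \<le> n \<and> l \<le> k \<and> k + l = card S \<and>
        (\<forall>i\<in>{1..k}. \<forall>j\<in>{k+1..k+l}. M i j = K2 \<and> M j i = K2) \<and>
        self_conj_block M {1..k} \<and> self_conj_block M {k+1..k+l} \<and>
        (\<forall>i\<in>{1..k}. \<forall>j\<in>{1..k}. row_sum M S i = row_sum M S j) \<and>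
        (\<forall>i\<in>{k+1..k+l}. \<forall>j\<in>{k+1..k+l}. row_sum M S i = row_sum M S j) \<and>
        (\<forall>i\<in>{1..k}. \<forall>j\<in>{k+1..k+l}. row_sum M S i \<noteq> row_sum M S j))"

end

theory Submission
  imports Defs
begin

text \<open>
  A spin-c set S of a distinguished matrix is never empty (take U = {1, 2}). Conjugating
  suitable columns, which changes neither J_M nor the spin-c property, makes the block of M
  on S self-conjugate, so that i \<rightarrow> j iff M i j = 3 is a tournament on S. A triple
  U \<subseteq> S has J_M(U) = {} exactly when it is a directed 3-cycle, hence the hypothesis makes
  the tournament transitive. Its two top vertices then have equal rows on the rest of S, whereas the
  spin-c condition for a pair U = {i, j} says that these rows differ in an odd number of
  places. So |S| = 1, and a transposition moving S to {1}, followed by conjugating the columns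
  whose entry in the first row is 3, gives the standard form with k = 1 and l = 0.
\<close>

lemma kconj_add: "kconj (x + y) = kconj x + kconj y"
  by (cases x; cases y) (simp_all add: plus_klein_def)

lemma kconj_sum: "kconj (sum g A) = (\<Sum>a\<in>A. kconj (g a))"
  by (induction A rule: infinite_finite_induct) (simp_all add: zero_klein_def kconj_add)

lemma kconj_eq_K1_iff [simp]: "kconj x = K1 \<longleftrightarrow> x = K1"
  by (cases x) auto

lemma klein_add_eq_K0_iff: "a + b = K0 \<longleftrightarrow> a = b" for a b :: klein
  by (cases a; cases b) (simp_all add: plus_klein_def)

lemma klein_K1_add_eq_K1_iff [simp]: "K1 + a = K1 \<longleftrightarrow> a = K0" "a + K1 = K1 \<longleftrightarrow> a = K0"
  by (cases a; simp add: plus_klein_def)+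

lemma klein_add_eq_K1_iff:
  "a \<in> {K2, K3} \<Longrightarrow> b \<in> {K2, K3} \<Longrightarrow> a + b = K1 \<longleftrightarrow> a \<noteq> b"
  by (auto simp: plus_klein_def)

lemma klein_add3_neq_K1:
  "a \<in> {K2, K3} \<Longrightarrow> b \<in> {K2, K3} \<Longrightarrow> c \<in> {K2, K3} \<Longrightarrow> a + (b + c) \<noteq> K1"
  by (auto simp: plus_klein_def)

lemma kconj_kconj [simp]: "kconj (kconj x) = x"
  by (cases x) auto

lemma klein_gauge_edge:
  "a \<in> {K2, K3} \<Longrightarrow> b \<in> {K2, K3} \<Longrightarrow> (if a = b then kconj else id) a = kconj b"
  by auto

lemma klein_gauge_triangle:
  assumes "a \<in> {K2, K3}" "b \<in> {K2, K3}" "a' \<in> {K2, K3}" "b' \<in> {K2, K3}" "e \<in> {K2, K3}" "f \<in> {K2, K3}"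
    and "odd (of_bool (a \<noteq> b) + of_bool (a' \<noteq> f) + of_bool (b' \<noteq> e) :: nat)"
  shows "(if a' = a then kconj else id) f = kconj ((if b' = b then kconj else id) e)"
  using assms by (simp; elim disjE) simp_all

lemma distinguished_diag: "distinguished n M \<Longrightarrow> i \<in> {1..n} \<Longrightarrow> M i i = K1"
  by (simp add: distinguished_def)

lemma distinguished_off_diag:
  "distinguished n M \<Longrightarrow> i \<in> {1..n} \<Longrightarrow> j \<in> {1..n} \<Longrightarrow> i \<noteq> j \<Longrightarrow> M i j \<in> {K2, K3}"
  by (simp add: distinguished_def)

lemma gact_apply:
  "gact c \<sigma> M i j = (if c j then kconj else id) (M (inv \<sigma> i) (inv \<sigma> j))"
  by (simp add: gact_def)

lemma JM_gact:
  assumes \<sigma>: "\<sigma> permutes {1..n}"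
  shows "JM n (gact c \<sigma> M) U = \<sigma> ` JM n M (inv \<sigma> ` U)"
proof -
  have \<tau>: "inv \<sigma> permutes {1..n}" using \<sigma> by (rule permutes_inv)
  have "j \<in> JM n (gact c \<sigma> M) U \<longleftrightarrow> inv \<sigma> j \<in> JM n M (inv \<sigma> ` U)" for j
  proof -
    have "(\<Sum>i\<in>inv \<sigma> ` U. M i (inv \<sigma> j)) = (\<Sum>i\<in>U. M (inv \<sigma> i) (inv \<sigma> j))"
      using permutes_inj[OF \<tau>] by (simp add: sum.reindex inj_on_subset)
    then have "(\<Sum>i\<in>U. gact c \<sigma> M i j) = (if c j then kconj else id) (\<Sum>i\<in>inv \<sigma> ` U. M i (inv \<sigma> j))"
      by (simp add: gact_apply kconj_sum)
    then show ?thesis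
      unfolding JM_def mem_Collect_eq permutes_in_image[OF \<tau>] by simp
  qed
  moreover have "j \<in> \<sigma> ` B \<longleftrightarrow> inv \<sigma> j \<in> B" for j B
    by (metis inj_image_mem_iff permutes_inj[OF \<sigma>] permutes_inverses(1)[OF \<sigma>])
  ultimately show ?thesis
    by blast
qed

lemma symdiff_image: "inj f \<Longrightarrow> symdiff (f ` A) (f ` B) = f ` symdiff A B"
  unfolding symdiff_def by (simp add: image_Un image_set_diff)

lemma spinc_set_gact:
  assumes \<sigma>: "\<sigma> permutes {1..n}" and S: "spinc_set n M S"
  shows "spinc_set n (gact c \<sigma> M) (\<sigma> ` S)"
  unfolding spinc_set_def
proof (intro conjI allI impI)
  show "\<sigma> ` S \<subseteq> {1..n}"
    using S permutes_image[OF \<sigma>] by (auto simp: spinc_set_def)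
next
  fix U assume U: "U \<subseteq> {1..n}"
  have inj: "inj \<sigma>" "inj (inv \<sigma>)"
    using \<sigma> permutes_inv permutes_inj by blast+
  let ?V = "inv \<sigma> ` U"
  have V: "?V \<subseteq> {1..n}" using U permutes_image[OF permutes_inv[OF \<sigma>]] by auto
  have U_eq: "U = \<sigma> ` ?V"
    using permutes_inverses(1)[OF \<sigma>] by (simp add: image_image)
  have "symdiff (JM n (gact c \<sigma> M) U) U \<inter> \<sigma> ` S = \<sigma> ` (symdiff (JM n M ?V) ?V \<inter> S)"
    by (subst (2) U_eq) (simp add: JM_gact[OF \<sigma>] symdiff_image inj image_Int)
  then have "card (symdiff (JM n (gact c \<sigma> M) U) U \<inter> \<sigma> ` S) = card (symdiff (JM n M ?V) ?V \<inter> S)"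
    by (simp add: card_image inj_on_subset[OF inj(1)])
  moreover have "card ?V = card U" by (simp add: card_image inj_on_subset[OF inj(2)])
  ultimately show "card (symdiff (JM n (gact c \<sigma> M) U) U \<inter> \<sigma> ` S) mod 2 = (card U choose 2) mod 2"
    using S V by (simp add: spinc_set_def)
qed

lemma distinguished_gact:
  assumes \<sigma>: "\<sigma> permutes {1..n}" and M: "distinguished n M"
  shows "distinguished n (gact c \<sigma> M)"
proof -
  have \<tau>: "inv \<sigma> permutes {1..n}" using \<sigma> by (rule permutes_inv)
  have inj: "inv \<sigma> i = inv \<sigma> j \<longleftrightarrow> i = j" for i j
    using permutes_inj[OF \<tau>] by (auto dest: injD)
  show ?thesis
    unfolding distinguished_def gact_apply
  proof (intro conjI ballI impI)
    fix i assume "i \<in> {1..n}"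
    then show "(if c i then kconj else id) (M (inv \<sigma> i) (inv \<sigma> i)) = K1"
      using distinguished_diag[OF M] permutes_in_image[OF \<tau>] by simp
  next
    fix i j assume "i \<in> {1..n}" "j \<in> {1..n}" "i \<noteq> j"
    then have "M (inv \<sigma> i) (inv \<sigma> j) \<in> {K2, K3}"
      using distinguished_off_diag[OF M] permutes_in_image[OF \<tau>] inj by simp
    then show "(if c j then kconj else id) (M (inv \<sigma> i) (inv \<sigma> j)) \<in> {K2, K3}"
      by auto
  qed
qed

lemma JM_doubleton:
  assumes M: "distinguished n M" and x: "x \<in> {1..n}" and y: "y \<in> {1..n}" and "x \<noteq> y"
  shows "JM n M {x, y} = {k \<in> {1..n}. k \<noteq> x \<and> k \<noteq> y \<and> M x k \<noteq> M y k}"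
proof -
  have "M x k + M y k = K1 \<longleftrightarrow> k \<noteq> x \<and> k \<noteq> y \<and> M x k \<noteq> M y k" if k: "k \<in> {1..n}" for k
  proof -
    consider "k = x" | "k = y" | "k \<noteq> x" "k \<noteq> y" by blast
    then show ?thesis
    proof cases
      case 1
      then show ?thesis
        using \<open>x \<noteq> y\<close> distinguished_diag[OF M x] distinguished_off_diag[OF M y x]
        by (auto simp: klein_add_eq_K0_iff)
    next
      case 2
      then show ?thesis
        using \<open>x \<noteq> y\<close> distinguished_diag[OF M y] distinguished_off_diag[OF M x y]
        by (auto simp: klein_add_eq_K0_iff)
    next
      case 3
      then show ?thesis
        using distinguished_off_diag[OF M x k] distinguished_off_diag[OF M y k]
        by (simp add: klein_add_eq_K1_iff)
    qed
  qed
  then show ?thesis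
    using \<open>x \<noteq> y\<close> by (auto simp: JM_def)
qed

lemma JM_triple:
  assumes M: "distinguished n M" and x: "x \<in> {1..n}" and y: "y \<in> {1..n}" and z: "z \<in> {1..n}"
    and "x \<noteq> y" "x \<noteq> z" "y \<noteq> z"
  shows "JM n M {x, y, z} =
    {m. m = x \<and> M y x = M z x \<or> m = y \<and> M x y = M z y \<or> m = z \<and> M x z = M y z}"
proof -
  have "M x m + (M y m + M z m) = K1 \<longleftrightarrow>
    m = x \<and> M y x = M z x \<or> m = y \<and> M x y = M z y \<or> m = z \<and> M x z = M y z"
    if m: "m \<in> {1..n}" for m
  proof -
    consider "m = x" | "m = y" | "m = z" | "m \<noteq> x" "m \<noteq> y" "m \<noteq> z" by blast
    then show ?thesis
    proof cases
      case 1
      then show ?thesis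
        using assms distinguished_diag[OF M x] by (auto simp: klein_add_eq_K0_iff)
    next
      case 2
      then show ?thesis
        using assms distinguished_diag[OF M y] by (auto simp: add.left_commute klein_add_eq_K0_iff)
    next
      case 3
      then show ?thesis
        using assms distinguished_diag[OF M z]
        by (auto simp: add.left_commute add.commute klein_add_eq_K0_iff)
    next
      case 4
      then show ?thesis
        using klein_add3_neq_K1 distinguished_off_diag[OF M _ m] x y z by blast
    qed
  qed
  then show ?thesis
    using assms by (auto simp: JM_def)
qed

lemma card_Collect_three:
  assumes "a \<noteq> b" "a \<noteq> c" "b \<noteq> c"
  shows "card {m. m = a \<and> P \<or> m = b \<and> Q \<or> m = c \<and> R} = of_bool P + of_bool Q + of_bool R"
proof -
  have "{m. m = a \<and> P \<or> m = b \<and> Q \<or> m = c \<and> R} =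
      (if P then {a} else {}) \<union> (if Q then {b} else {}) \<union> (if R then {c} else {})"
    by auto
  then show ?thesis
    using assms by (cases P; cases Q; cases R) auto
qed

lemma spinc_set_parity:
  "spinc_set n M S \<Longrightarrow> U \<subseteq> {1..n} \<Longrightarrow>
    card (symdiff (JM n M U) U \<inter> S) mod 2 = (card U choose 2) mod 2"
  by (simp add: spinc_set_def)

lemma spinc_pair_parity:
  assumes M: "distinguished n M" and S: "spinc_set n M S"
    and "x \<in> S" "y \<in> S" "x \<noteq> y"
  shows "odd (card {k \<in> S - {x, y}. M x k \<noteq> M y k})"
proof -
  let ?D = "{k \<in> S - {x, y}. M x k \<noteq> M y k}"
  have S_sub: "S \<subseteq> {1..n}" using S by (simp add: spinc_set_def)
  then have U: "{x, y} \<subseteq> {1..n}" using assms by auto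
  have "symdiff (JM n M {x, y}) {x, y} \<inter> S = insert x (insert y ?D)"
    using assms S_sub U by (auto simp: JM_doubleton[OF M] symdiff_def)
  moreover have "finite S" using S_sub finite_subset by blast
  ultimately have "card (symdiff (JM n M {x, y}) {x, y} \<inter> S) = Suc (Suc (card ?D))"
    using \<open>x \<noteq> y\<close> by simp
  moreover have "(card {x, y} choose 2) mod 2 = 1"
    using \<open>x \<noteq> y\<close> by (simp add: choose_two)
  ultimately have "Suc (Suc (card ?D)) mod 2 = 1"
    using spinc_set_parity[OF S U] by metis
  then show ?thesis
    by presburger
qed

lemma spinc_triple_parity:
  assumes M: "distinguished n M" and S: "spinc_set n M S"
    and "x \<in> S" "y \<in> S" "z \<in> S" "x \<noteq> y" "x \<noteq> z" "y \<noteq> z"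
  shows "odd (of_bool (M y x \<noteq> M z x) + of_bool (M x y \<noteq> M z y) + of_bool (M x z \<noteq> M y z) :: nat)"
proof -
  have S_sub: "S \<subseteq> {1..n}" using S by (simp add: spinc_set_def)
  then have U: "{x, y, z} \<subseteq> {1..n}" using assms by auto
  have "symdiff (JM n M {x, y, z}) {x, y, z} \<inter> S =
      {m. m = x \<and> M y x \<noteq> M z x \<or> m = y \<and> M x y \<noteq> M z y \<or> m = z \<and> M x z \<noteq> M y z}"
    using assms U by (auto simp: JM_triple[OF M] symdiff_def)
  also have "card \<dots> = of_bool (M y x \<noteq> M z x) + of_bool (M x y \<noteq> M z y) + of_bool (M x z \<noteq> M y z)"
    by (rule card_Collect_three) (use assms in auto)
  moreover have "(card {x, y, z} choose 2) mod 2 = 1"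
    using assms by (simp add: choose_two)
  ultimately show ?thesis
    using spinc_set_parity[OF S U] by (metis odd_iff_mod_2_eq_one)
qed

text \<open>
  Conjugating column j \<noteq> v exactly when M v j = M j v makes row and column v conjugate;
  the parity of the triple {v, i, j} then forces every other pair i, j to be conjugate too.
\<close>

lemma self_conj_column_gauge:
  assumes M: "distinguished n M" and S: "spinc_set n M S"
  shows "\<exists>c. self_conj_block (gact c id M) S"
proof (cases "S = {}")
  case True
  then show ?thesis by (simp add: self_conj_block_def)
next
  case False
  then obtain v where v: "v \<in> S" by blast
  have S_sub: "S \<subseteq> {1..n}" using S by (simp add: spinc_set_def)
  have off: "M i j \<in> {K2, K3}" if "i \<in> S" "j \<in> S" "i \<noteq> j" for i j
    using that S_sub distinguished_off_diag[OF M] by blast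
  define c where "c j \<longleftrightarrow> j \<noteq> v \<and> M v j = M j v" for j
  let ?N = "gact c id M"
  have N: "?N i j = (if c j then kconj else id) (M i j)" for i j
    by (simp add: gact_apply)
  have "?N j i = kconj (?N i j)" if ij: "i \<in> S" "j \<in> S" for i j
  proof -
    consider "i = j" | "i = v" "j \<noteq> v" | "j = v" "i \<noteq> v" | "i \<noteq> v" "j \<noteq> v" "i \<noteq> j"
      by blast
    then show ?thesis
    proof cases
      case 1
      moreover have "M i i = K1" using distinguished_diag[OF M] S_sub ij(1) by blast
      ultimately show ?thesis by (simp add: N)
    next
      case 2
      then show ?thesis
        using klein_gauge_edge[OF off[OF v ij(2)] off[OF ij(2) v]] by (simp add: N c_def)
    next
      case 3
      then show ?thesis
        using klein_gauge_edge[OF off[OF v ij(1)] off[OF ij(1) v]] by (simp add: N c_def)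
    next
      case 4
      then show ?thesis
        unfolding N c_def
        using klein_gauge_triangle[OF off[OF ij(1) v] off[OF ij(2) v] off[OF v ij(1)] off[OF v ij(2)]
            off[OF ij] off[OF ij(2,1)] spinc_triple_parity[OF M S v ij]] 4
        by simp
    qed
  qed
  then show ?thesis
    by (auto simp: self_conj_block_def)
qed

lemma finite_tournament_has_top:
  assumes "finite A" "A \<noteq> {}"
    and total: "\<And>x y. x \<in> A \<Longrightarrow> y \<in> A \<Longrightarrow> x \<noteq> y \<Longrightarrow> R x y \<or> R y x"
    and trans: "\<And>x y z. x \<in> A \<Longrightarrow> y \<in> A \<Longrightarrow> z \<in> A \<Longrightarrow> x \<noteq> y \<Longrightarrow> y \<noteq> z \<Longrightarrow> x \<noteq> z \<Longrightarrow>
      R x y \<Longrightarrow> R y z \<Longrightarrow> R x z"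
  shows "\<exists>m\<in>A. \<forall>k\<in>A - {m}. R m k"
  using assms
proof (induction A rule: finite_ne_induct)
  case (singleton x)
  show ?case by blast
next
  case (insert x F)
  have "\<exists>m\<in>F. \<forall>k\<in>F - {m}. R m k"
    by (rule insert.IH) (use insert.prems in blast)+
  then obtain m where m: "m \<in> F" and top: "\<And>k. k \<in> F - {m} \<Longrightarrow> R m k"
    by blast
  have "x \<noteq> m" using m insert.hyps(3) by blast
  show ?case
  proof (cases "R x m")
    case True
    have "R x k" if "k \<in> F - {m}" for k
      using insert.prems(2)[of x m k] top[OF that] True that m \<open>x \<noteq> m\<close> insert.hyps(3) by blast
    then show ?thesis
      using True m insert.hyps(3) by (intro bexI[of _ x]) auto
  next
    case False
    then have "R m x" using insert.prems(1)[of x m] m \<open>x \<noteq> m\<close> by blast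
    then show ?thesis
      using top m by (intro bexI[of _ m]) auto
  qed
qed

lemma finite_tournament_top_two:
  assumes "finite A" "2 \<le> card A"
    and total: "\<And>x y. x \<in> A \<Longrightarrow> y \<in> A \<Longrightarrow> x \<noteq> y \<Longrightarrow> R x y \<or> R y x"
    and trans: "\<And>x y z. x \<in> A \<Longrightarrow> y \<in> A \<Longrightarrow> z \<in> A \<Longrightarrow> x \<noteq> y \<Longrightarrow> y \<noteq> z \<Longrightarrow> x \<noteq> z \<Longrightarrow>
      R x y \<Longrightarrow> R y z \<Longrightarrow> R x z"
  shows "\<exists>m1\<in>A. \<exists>m2\<in>A. m1 \<noteq> m2 \<and> (\<forall>k\<in>A - {m1, m2}. R m1 k \<and> R m2 k)"
proof -
  have "A \<noteq> {}" using \<open>2 \<le> card A\<close> by auto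
  have "\<exists>m\<in>A. \<forall>k\<in>A - {m}. R m k"
    by (rule finite_tournament_has_top[OF \<open>finite A\<close> \<open>A \<noteq> {}\<close> total trans])
  then obtain m1 where m1: "m1 \<in> A" "\<forall>k\<in>A - {m1}. R m1 k"
    by blast
  have "\<exists>m\<in>A - {m1}. \<forall>k\<in>A - {m1} - {m}. R m k"
  proof (rule finite_tournament_has_top)
    show "finite (A - {m1})" using \<open>finite A\<close> by simp
    show "A - {m1} \<noteq> {}"
    proof
      assume "A - {m1} = {}"
      then have "A = {m1}" using m1(1) by blast
      then show False using \<open>2 \<le> card A\<close> by simp
    qed
  next
    fix x y assume "x \<in> A - {m1}" "y \<in> A - {m1}" "x \<noteq> y"
    then show "R x y \<or> R y x" using total by blast
  next
    fix x y z assume "x \<in> A - {m1}" "y \<in> A - {m1}" "z \<in> A - {m1}"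
      and "x \<noteq> y" "y \<noteq> z" "x \<noteq> z" "R x y" "R y z"
    then show "R x z" using trans[of x y z] by blast
  qed
  then obtain m2 where "m2 \<in> A - {m1}" "\<forall>k\<in>A - {m1} - {m2}. R m2 k"
    by blast
  then show ?thesis
    using m1 by (intro bexI[of _ m1] bexI[of _ m2]) auto
qed

lemma self_conj_triple_trans:
  assumes N: "distinguished n N" and S_sub: "S \<subseteq> {1..n}" and self_conj: "self_conj_block N S"
    and xyz: "x \<in> S" "y \<in> S" "z \<in> S" "x \<noteq> y" "y \<noteq> z" "x \<noteq> z"
    and J: "JM n N {x, y, z} \<noteq> {}" and "N x y = K3" "N y z = K3"
  shows "N x z = K3"
proof (rule ccontr)
  assume "N x z \<noteq> K3"
  then have "N x z = K2"
    using distinguished_off_diag[OF N] S_sub xyz by blast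
  moreover have "N y x = kconj (N x y)" "N z y = kconj (N y z)" "N z x = kconj (N x z)"
    using self_conj xyz unfolding self_conj_block_def by blast+
  ultimately have "N y x \<noteq> N z x" "N x y \<noteq> N z y" "N x z \<noteq> N y z"
    using \<open>N x y = K3\<close> \<open>N y z = K3\<close> by simp_all
  then have "JM n N {x, y, z} = {}"
    using xyz S_sub by (subst JM_triple[OF N]) auto
  with J show False ..
qed

lemma spinc_set_card_le_1:
  assumes M: "distinguished n M" and S: "spinc_set n M S"
    and J: "\<And>U. U \<subseteq> S \<Longrightarrow> card U = 3 \<Longrightarrow> JM n M U \<noteq> {}"
  shows "card S \<le> 1"
proof (rule ccontr)
  assume "\<not> card S \<le> 1"
  obtain c where self_conj: "self_conj_block (gact c id M) S"
    using self_conj_column_gauge[OF M S] ..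
  define N where "N = gact c id M"
  have N: "distinguished n N" "spinc_set n N S" "self_conj_block N S"
    using distinguished_gact[OF permutes_id M] spinc_set_gact[OF permutes_id S] self_conj
    by (simp_all add: N_def)
  have JM_N: "JM n N U = JM n M U" for U
    by (simp add: N_def JM_gact[OF permutes_id])
  have S_sub: "S \<subseteq> {1..n}" using S by (simp add: spinc_set_def)
  have "\<exists>m1\<in>S. \<exists>m2\<in>S. m1 \<noteq> m2 \<and> (\<forall>k\<in>S - {m1, m2}. N m1 k = K3 \<and> N m2 k = K3)"
  proof (rule finite_tournament_top_two)
    show "finite S" using S_sub finite_subset by blast
    show "2 \<le> card S" using \<open>\<not> card S \<le> 1\<close> by simp
  next
    fix x y assume "x \<in> S" "y \<in> S" "x \<noteq> y"
    then have "N x y \<in> {K2, K3}" "N y x = kconj (N x y)"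
      using distinguished_off_diag[OF N(1)] S_sub N(3) unfolding self_conj_block_def by blast+
    then show "N x y = K3 \<or> N y x = K3" by auto
  next
    fix x y z assume "x \<in> S" "y \<in> S" "z \<in> S" "x \<noteq> y" "y \<noteq> z" "x \<noteq> z"
      and "N x y = K3" "N y z = K3"
    moreover have "JM n N {x, y, z} \<noteq> {}"
      using J[of "{x, y, z}"] JM_N \<open>x \<in> S\<close> \<open>y \<in> S\<close> \<open>z \<in> S\<close> \<open>x \<noteq> y\<close> \<open>y \<noteq> z\<close> \<open>x \<noteq> z\<close> by simp
    ultimately show "N x z = K3"
      using self_conj_triple_trans[OF N(1) S_sub N(3)] by blast
  qed
  then obtain m1 m2 where m: "m1 \<in> S" "m2 \<in> S" "m1 \<noteq> m2"
    and top: "\<forall>k\<in>S - {m1, m2}. N m1 k = K3 \<and> N m2 k = K3"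
    by blast
  from top have "{k \<in> S - {m1, m2}. N m1 k \<noteq> N m2 k} = {}"
    by (metis (mono_tags, lifting) empty_Collect_eq)
  with spinc_pair_parity[OF N(1,2) m] show False
    by (metis card.empty even_zero)
qed

lemma spinc_set_nonempty:
  assumes "2 \<le> n" and S: "spinc_set n M S"
  shows "S \<noteq> {}"
proof
  assume "S = {}"
  have "{1, 2} \<subseteq> {1..n}" using \<open>2 \<le> n\<close> by auto
  from spinc_set_parity[OF S this] \<open>S = {}\<close> show False
    by (simp add: choose_two)
qed

lemma standard_form_singletonI:
  assumes "spinc_set n G {1}" "distinguished n G" "G 1 1 = K1" "\<forall>j\<in>{2..n}. G 1 j = K2"
  shows "standard_form n G {1}"
proof -
  have "1 \<le> n" using assms(1) by (simp add: spinc_set_def)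
  then show ?thesis
    using assms unfolding standard_form_def self_conj_block_def
    by (simp add: exI[of _ "1::nat"])
qed

lemma exists_standard_form_singleton:
  assumes M: "distinguished n M" and S: "spinc_set n M {x}"
  shows "\<exists>c \<sigma>. \<sigma> permutes {1..n} \<and> standard_form n (gact c \<sigma> M) (\<sigma> ` {x})"
proof -
  have x: "x \<in> {1..n}" using S by (simp add: spinc_set_def)
  then have one: "1 \<in> {1..n}" by auto
  define \<sigma> where "\<sigma> = transpose x 1"
  define c where "c j \<longleftrightarrow> M x (\<sigma> j) = K3" for j
  define G where "G = gact c \<sigma> M"
  have \<sigma>: "\<sigma> permutes {1..n}"
    unfolding \<sigma>_def using x one by (rule permutes_swap_id)
  have G: "G i j = (if c j then kconj else id) (M (\<sigma> i) (\<sigma> j))" for i j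
    by (simp add: G_def \<sigma>_def gact_apply)
  have \<sigma>_1: "\<sigma> 1 = x" and S_img: "\<sigma> ` {x} = {1}" by (simp_all add: \<sigma>_def)
  have G_spinc: "spinc_set n G {1}"
    using spinc_set_gact[OF \<sigma> S, of c] unfolding G_def S_img .
  have G_dist: "distinguished n G"
    unfolding G_def using \<sigma> M by (rule distinguished_gact)
  have first_row: "G 1 j = K2" if j: "j \<in> {2..n}" for j
  proof -
    have "\<sigma> j \<in> {1..n}" "\<sigma> j \<noteq> x"
      using j permutes_in_image[OF \<sigma>] by (auto simp: \<sigma>_def transpose_eq_iff)
    then have "M x (\<sigma> j) \<in> {K2, K3}" using distinguished_off_diag[OF M x] by blast
    moreover have "G 1 j = (if c j then kconj else id) (M x (\<sigma> j))"
      unfolding G \<sigma>_1 ..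
    ultimately show ?thesis by (auto simp: c_def)
  qed
  have "standard_form n G {1}"
    using G_spinc G_dist distinguished_diag[OF G_dist one] first_row
    by (intro standard_form_singletonI) auto
  then show ?thesis
    using \<sigma> S_img unfolding G_def by metis
qed

theorem mainTheorem14:
  fixes n :: nat and M :: kmat and S :: "nat set"
  assumes "odd n" and "3 \<le> n"
    and "distinguished n M"
    and "spinc_set n M S"
    and "\<forall>U. U \<subseteq> S \<and> card U = 3 \<longrightarrow> JM n M U \<noteq> {}"
  shows "\<exists>c \<sigma>. \<sigma> permutes {1..n} \<and> standard_form n (gact c \<sigma> M) (\<sigma> ` S)"
proof -
  have "S \<noteq> {}"
    using spinc_set_nonempty[OF _ assms(4)] assms(2) by simp
  moreover have "card S \<le> 1"
    using spinc_set_card_le_1[OF assms(3,4)] assms(5) by blast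
  moreover have "finite S"
    using assms(4) finite_subset by (auto simp: spinc_set_def)
  ultimately have "card S = 1"
    by (simp add: card_gt_0_iff le_antisym Suc_le_eq)
  then obtain x where "S = {x}"
    by (rule card_1_singletonE)
  then show ?thesis
    using exists_standard_form_singleton[OF assms(3)] assms(4) by blast
qed

end
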